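(* There exists a human–algorithm system (as defined in the context) with $N=2$ regimes in which the unaided human and the algorithm have correlated losses, namely $h_1>h_2$ and $a_1>a_2$ (both have higher loss in regime 1), and which nevertheless exhibits complementarity.
   Context: A human–algorithm system consists of: an integer $N\ge1$ (number of regimes); probabilities $p_1,\dots,p_N\ge 0$ with $\sum_i p_i=1$; algorithmic losses $a_1,\dots,a_N\ge 0$ and unaided-human losses $h_1,\dots,h_N\ge0$; and a combining function $c:[0,\infty)^2\to\mathbb{R}$ satisfying $\min(a,h)\le c(a,h)\le\max(a,h)$ for all $a,h\ge0$, where $c(a_i,h_i)$ is the loss of the combined system in regime $i$. Write $A=\sum_i p_i a_i$ and $H=\sum_i p_i h_i$. The system exhibits complementarity if $\sum_{i=1}^N p_i\,c(a_i,h_i)<\min(A,H)$. *)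

theory Defs
  imports Complex_Main
begin

definition combining_fn :: "(real \<Rightarrow> real \<Rightarrow> real) \<Rightarrow> bool" where
  "combining_fn c \<longleftrightarrow> (\<forall>a h. a \<ge> 0 \<longrightarrow> h \<ge> 0 \<longrightarrow> min a h \<le> c a h \<and> c a h \<le> max a h)"

definition ha_system :: "nat \<Rightarrow> (nat \<Rightarrow> real) \<Rightarrow> (nat \<Rightarrow> real) \<Rightarrow> (nat \<Rightarrow> real)
    \<Rightarrow> (real \<Rightarrow> real \<Rightarrow> real) \<Rightarrow> bool" where
  "ha_system N p a h c \<longleftrightarrow> N \<ge> 1 \<and> (\<forall>i\<in>{1..N}. p i \<ge> 0 \<and> a i \<ge> 0 \<and> h i \<ge> 0)
     \<and> (\<Sum>i=1..N. p i) = 1 \<and> combining_fn c"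

definition complementarity :: "nat \<Rightarrow> (nat \<Rightarrow> real) \<Rightarrow> (nat \<Rightarrow> real) \<Rightarrow> (nat \<Rightarrow> real)
    \<Rightarrow> (real \<Rightarrow> real \<Rightarrow> real) \<Rightarrow> bool" where
  "complementarity N p a h c \<longleftrightarrow>
     (\<Sum>i=1..N. p i * c (a i) (h i)) < min (\<Sum>i=1..N. p i * a i) (\<Sum>i=1..N. p i * h i)"

end

theory Submission
  imports Defs
begin

text \<open>Correlated losses do not preclude complementarity: it suffices that the ranking of
  human and algorithm flips between the regimes. With equally likely regimes, algorithm losses
  (3, 0) and human losses (2, 1), both have expected loss 3/2, while the combination that always
  follows the better of the two, \<open>c = min\<close>, has expected loss 1.\<close>

lemma combining_fn_min: "combining_fn min"
  unfolding combining_fn_def by auto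

lemma sum_atLeastAtMost_one_two: "(\<Sum>i = 1..2::nat. f i) = f 1 + f 2"
  by (simp add: numeral_2_eq_2)

theorem lemma6:
  shows "\<exists>p a h c. ha_system 2 p a h c \<and> h 1 > h 2 \<and> a 1 > a 2 \<and> complementarity 2 p a h c"
proof (intro exI conjI)
  let ?p = "\<lambda>i::nat. 1 / 2 :: real"
  let ?a = "\<lambda>i::nat. if i = 1 then 3 else 0 :: real"
  let ?h = "\<lambda>i::nat. if i = 1 then 2 else 1 :: real"
  show "ha_system 2 ?p ?a ?h min"
    unfolding ha_system_def by (auto simp: combining_fn_min sum_atLeastAtMost_one_two)
  show "?h 1 > ?h 2" and "?a 1 > ?a 2"
    by simp_all
  show "complementarity 2 ?p ?a ?h min"
    unfolding complementarity_def sum_atLeastAtMost_one_two by simp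
qed

end
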